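(* Let $r\ge5$, let $A$ be an independent set in $G(n,r,1)$, let $A_0=\{v_1,\dots,v_k\}$, $I_0$, $A_1$, $P$ be as in the context, and fix $x\in[n]\setminus(I_0\cup P)$. For $i=1,\dots,k$ let $B_i=\{v\in A_1: x\in v,\ v\cap v_i\ne\emptyset\}$, and for each $v\in B_i$ let $f(v)=v\setminus\{x,y,z\}$ where $y,z$ are two (arbitrarily chosen) distinct elements of $v\cap v_i$. Let $\omega=r^5\binom{n}{r-5}$. If $i\ne j$, $B_i\ne\emptyset$ and $|B_j|\ge\omega$, then $f(u_1)\cap f(u_2)\ne\emptyset$ for all $u_1,u_2\in B_i$.
   Context: $G(n,r,1)$ is the graph on $[n]^{(r)}$ in which two $r$-subsets are adjacent iff they intersect in exactly one element; members of an independent set pairwise intersect in $0$ or at least $2$ elements, so each $v\in B_i$ has $|v\cap v_i|\ge2$. $A_0=\{v_1,\dots,v_k\}\subset A$ is a subfamily of pairwise disjoint sets of maximum cardinality, $I_0=v_1\cup\dots\cup v_k$, $A_1$ is the set of $v\in A\setminus A_0$ intersecting exactly one $v_i$. Distinct elements $x,y$ are joint if every $v\in A_1$ satisfies $|v\cap\{x,y\}|\ne1$; $P$ is the set of elements of $[n]\setminus I_0$ joint with some other element of $[n]\setminus I_0$. *)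

theory Defs
  imports Main "HOL-Library.Disjoint_Sets"
begin

definition r_subsets :: "nat \<Rightarrow> nat \<Rightarrow> nat set set" where
  "r_subsets n r = {X. X \<subseteq> {1..n} \<and> card X = r}"

definition indep_Gnr1 :: "nat \<Rightarrow> nat \<Rightarrow> nat set set \<Rightarrow> bool" where
  "indep_Gnr1 n r A \<longleftrightarrow> A \<subseteq> r_subsets n r \<and>
     (\<forall>u\<in>A. \<forall>w\<in>A. u \<noteq> w \<longrightarrow> card (u \<inter> w) \<noteq> 1)"

definition max_disjoint_subfamily :: "nat set set \<Rightarrow> nat \<Rightarrow> (nat \<Rightarrow> nat set) \<Rightarrow> bool" where
  "max_disjoint_subfamily A k v \<longleftrightarrow>
     inj_on v {1..k} \<and> v ` {1..k} \<subseteq> A \<and> disjoint_family_on v {1..k} \<and>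
     (\<forall>S. S \<subseteq> A \<longrightarrow> disjoint S \<longrightarrow> card S \<le> k)"

definition I0 :: "nat \<Rightarrow> (nat \<Rightarrow> nat set) \<Rightarrow> nat set" where
  "I0 k v = (\<Union>i\<in>{1..k}. v i)"

definition A1 :: "nat set set \<Rightarrow> nat \<Rightarrow> (nat \<Rightarrow> nat set) \<Rightarrow> nat set set" where
  "A1 A k v = {w \<in> A - v ` {1..k}. card {i\<in>{1..k}. w \<inter> v i \<noteq> {}} = 1}"

definition joint :: "nat set set \<Rightarrow> nat \<Rightarrow> (nat \<Rightarrow> nat set) \<Rightarrow> nat \<Rightarrow> nat \<Rightarrow> bool" where
  "joint A k v x y \<longleftrightarrow> x \<noteq> y \<and> (\<forall>w\<in>A1 A k v. card (w \<inter> {x, y}) \<noteq> 1)"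

definition Pset :: "nat \<Rightarrow> nat set set \<Rightarrow> nat \<Rightarrow> (nat \<Rightarrow> nat set) \<Rightarrow> nat set" where
  "Pset n A k v = {x \<in> {1..n} - I0 k v. \<exists>y \<in> {1..n} - I0 k v. y \<noteq> x \<and> joint A k v x y}"

definition Bset :: "nat set set \<Rightarrow> nat \<Rightarrow> (nat \<Rightarrow> nat set) \<Rightarrow> nat \<Rightarrow> nat \<Rightarrow> nat set set" where
  "Bset A k v x i = {w \<in> A1 A k v. x \<in> w \<and> w \<inter> v i \<noteq> {}}"

end

theory Submission
  imports Defs
begin

text \<open>Suppose \<open>f u\<^sub>1 \<inter> f u\<^sub>2 = {}\<close>. Every \<open>w \<in> B\<^sub>j\<close> shares \<open>x\<close> with each \<open>u \<in> B\<^sub>i\<close>, hence by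
  independence a second element, which avoids \<open>v\<^sub>i \<union> v\<^sub>j\<close> because \<open>w\<close> and \<open>u\<close> meet only one
  \<open>v\<^sub>l\<close> each; so it lies in \<open>f u\<close>. Likewise \<open>w\<close> meets \<open>v\<^sub>j\<close> in two elements. Thus \<open>w\<close> contains
  a 5-set \<open>{x, a, b, c, d}\<close> with \<open>a \<in> f u\<^sub>1\<close>, \<open>b \<in> f u\<^sub>2\<close>, \<open>c, d \<in> v\<^sub>j\<close>. There are at most \<open>r\<^sup>4\<close>
  such 5-sets, each lying in at most \<open>C(n, r - 5)\<close> \<open>r\<close>-subsets of \<open>[n]\<close>, contradicting
  \<open>|B\<^sub>j| \<ge> r\<^sup>5 C(n, r - 5)\<close>.\<close>

lemma r_subsetsD:
  assumes "W \<in> r_subsets n r"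
  shows "W \<subseteq> {1..n}" "card W = r" "finite W"
  using assms finite_subset by (auto simp: r_subsets_def)

lemma card_supersets_in_r_subsets:
  "card {W \<in> r_subsets n r. S \<subseteq> W} \<le> n choose (r - card S)"
proof -
  let ?F = "{W \<in> r_subsets n r. S \<subseteq> W}"
  let ?T = "{B. B \<subseteq> {1..n} \<and> card B = r - card S}"
  have "inj_on (\<lambda>W. W - S) ?F"
    by (rule inj_onI) blast
  moreover have "(\<lambda>W. W - S) ` ?F \<subseteq> ?T"
  proof
    fix B assume "B \<in> (\<lambda>W. W - S) ` ?F"
    then obtain W where W: "W \<in> r_subsets n r" "S \<subseteq> W" "B = W - S" by blast
    then have "finite S" using r_subsetsD(3) finite_subset by blast
    with W show "B \<in> ?T" by (auto simp: card_Diff_subset r_subsets_def)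
  qed
  moreover have "finite ?T" by (rule finite_subset[of _ "Pow {1..n}"]) auto
  ultimately have "card ?F \<le> card ?T" by (rule card_inj_on_le)
  also have "card ?T = n choose (r - card S)" using n_subsets[of "{1..n}"] by simp
  finally show ?thesis .
qed

lemma card_covered_by_supersets_le:
  assumes "B \<subseteq> r_subsets n r" and "finite T" and "\<forall>S\<in>T. card S = s"
    and "\<forall>W\<in>B. \<exists>S\<in>T. S \<subseteq> W"
  shows "card B \<le> card T * (n choose (r - s))"
proof -
  let ?U = "\<Union>S\<in>T. {W \<in> r_subsets n r. S \<subseteq> W}"
  have "B \<subseteq> ?U" using assms(1,4) by blast
  moreover have "finite ?U"
    by (rule finite_subset[of _ "Pow {1..n}"]) (auto simp: r_subsets_def)
  ultimately have "card B \<le> card ?U" by (rule card_mono[rotated])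
  also have "\<dots> \<le> (\<Sum>S\<in>T. card {W \<in> r_subsets n r. S \<subseteq> W})"
    using card_UN_le[OF assms(2)] .
  also have "\<dots> \<le> card T * (n choose (r - s))"
    by (rule sum_bounded_above[of T _ "n choose (r - s)", simplified])
      (metis assms(3) card_supersets_in_r_subsets)
  finally show ?thesis .
qed

lemma card_covered_by_five_sets_le:
  assumes "B \<subseteq> r_subsets n r" and "finite X" "finite Y" "finite Z"
    and "\<forall>W\<in>B. \<exists>a\<in>X. \<exists>b\<in>Y. \<exists>c\<in>Z. \<exists>d\<in>Z. card {x, a, b, c, d} = 5 \<and> {x, a, b, c, d} \<subseteq> W"
  shows "card B \<le> card X * card Y * card Z * card Z * (n choose (r - 5))"
proof -
  let ?Q = "X \<times> Y \<times> Z \<times> Z" and ?g = "\<lambda>(a, b, c, d). {x, a, b, c, d}"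
  let ?T = "{S \<in> ?g ` ?Q. card S = 5}"
  have "finite ?Q" using assms(2-4) by simp
  have "card ?T \<le> card (?g ` ?Q)"
    by (intro card_mono finite_imageI \<open>finite ?Q\<close>) blast
  also have "\<dots> \<le> card ?Q" by (rule card_image_le[OF \<open>finite ?Q\<close>])
  finally have "card ?T \<le> card X * card Y * card Z * card Z"
    by (simp add: card_cartesian_product mult.assoc)
  moreover have "\<forall>W\<in>B. \<exists>S\<in>?T. S \<subseteq> W"
  proof
    fix W assume "W \<in> B"
    then obtain a b c d where abcd: "(a, b, c, d) \<in> ?Q"
      and S: "card {x, a, b, c, d} = 5" "{x, a, b, c, d} \<subseteq> W"
      using assms(5) by force
    have "{x, a, b, c, d} \<in> ?T"
      using S(1) image_eqI[of _ ?g, OF _ abcd] by simp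
    with S(2) show "\<exists>S\<in>?T. S \<subseteq> W" by (rule bexI)
  qed
  then have "card B \<le> card ?T * (n choose (r - 5))"
    using card_covered_by_supersets_le[OF assms(1)] \<open>finite ?Q\<close> by simp
  ultimately show ?thesis by (meson le_trans mult_le_mono1)
qed

lemma Bset_subset_r_subsets:
  assumes "indep_Gnr1 n r A"
  shows "Bset A k v x l \<subseteq> r_subsets n r"
  using assms by (auto simp: indep_Gnr1_def Bset_def A1_def)

lemma indep_Gnr1_second_common_element:
  assumes "indep_Gnr1 n r A" "u \<in> A" "w \<in> A" "u \<noteq> w" "x \<in> u \<inter> w"
  obtains a where "a \<in> u \<inter> w" "a \<noteq> x"
proof -
  have "card (u \<inter> w) \<noteq> 1" using assms(1-4) by (simp add: indep_Gnr1_def)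
  then have "u \<inter> w \<noteq> {x}" by auto
  with assms(5) that show ?thesis by blast
qed

lemma A1_meets_unique:
  assumes "w \<in> A1 A k v" "l \<in> {1..k}" "m \<in> {1..k}" "w \<inter> v l \<noteq> {}" "w \<inter> v m \<noteq> {}"
  shows "l = m"
proof -
  have "card {i\<in>{1..k}. w \<inter> v i \<noteq> {}} = 1" using assms(1) by (simp add: A1_def)
  then obtain t where "{i\<in>{1..k}. w \<inter> v i \<noteq> {}} = {t}" by (rule card_1_singletonE)
  moreover have "l \<in> {i\<in>{1..k}. w \<inter> v i \<noteq> {}}" "m \<in> {i\<in>{1..k}. w \<inter> v i \<noteq> {}}"
    using assms(2-5) by auto
  ultimately show ?thesis by auto
qed

lemma Bset_disjoint_other:
  assumes "w \<in> Bset A k v x j" "i \<in> {1..k}" "j \<in> {1..k}" "i \<noteq> j"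
  shows "w \<inter> v i = {}"
  using assms A1_meets_unique[of w A k v i j] by (auto simp: Bset_def)

lemma Bset_common_element_outside:
  assumes "indep_Gnr1 n r A" "u \<in> Bset A k v x i" "w \<in> Bset A k v x j"
    "i \<in> {1..k}" "j \<in> {1..k}" "i \<noteq> j"
  obtains a where "a \<in> u \<inter> w" "a \<notin> insert x (v i \<union> v j)"
proof -
  have wi: "w \<inter> v i = {}" and uj: "u \<inter> v j = {}"
    using Bset_disjoint_other assms(2-6) by blast+
  have uA: "u \<in> A" and wA: "w \<in> A" and x: "x \<in> u \<inter> w" and "u \<inter> v i \<noteq> {}"
    using assms(2,3) by (auto simp: Bset_def A1_def)
  with wi have "u \<noteq> w" by blast
  then obtain a where "a \<in> u \<inter> w" "a \<noteq> x"
    using indep_Gnr1_second_common_element[OF assms(1) uA wA _ x] by blast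
  with wi uj that show ?thesis by blast
qed

lemma Bset_contains_five_set:
  assumes indep: "indep_Gnr1 n r A" and vjA: "v j \<in> A" and "x \<notin> v j"
    and "i \<in> {1..k}" "j \<in> {1..k}" "i \<noteq> j"
    and u1: "u1 \<in> Bset A k v x i" and u2: "u2 \<in> Bset A k v x i" and w: "w \<in> Bset A k v x j"
    and f: "\<And>u. u \<in> Bset A k v x i \<Longrightarrow> u - insert x (v i) \<subseteq> f u"
    and disj: "f u1 \<inter> f u2 = {}"
  obtains a b c d where "a \<in> f u1" "b \<in> f u2" "c \<in> v j" "d \<in> v j"
    "card {x, a, b, c, d} = 5" "{x, a, b, c, d} \<subseteq> w"
proof -
  obtain a where a: "a \<in> u1 \<inter> w" "a \<notin> insert x (v i \<union> v j)"
    using Bset_common_element_outside[OF indep u1 w] assms(4-6) by blast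
  obtain b where b: "b \<in> u2 \<inter> w" "b \<notin> insert x (v i \<union> v j)"
    using Bset_common_element_outside[OF indep u2 w] assms(4-6) by blast
  have af: "a \<in> f u1" and bf: "b \<in> f u2" using a b f[OF u1] f[OF u2] by blast+
  have wA: "w \<in> A" "w \<noteq> v j" and xw: "x \<in> w" and "w \<inter> v j \<noteq> {}"
    using w assms(5) by (auto simp: Bset_def A1_def)
  then obtain c where c: "c \<in> w \<inter> v j" by blast
  then obtain d where d: "d \<in> w \<inter> v j" "d \<noteq> c"
    using indep_Gnr1_second_common_element[OF indep wA(1) vjA wA(2) c] by blast
  have "a \<noteq> b" using af bf disj by blast
  moreover have "x \<noteq> a" "x \<noteq> b" "x \<noteq> c" "x \<noteq> d" "a \<noteq> c" "a \<noteq> d" "b \<noteq> c" "b \<noteq> d"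
    using a b c d \<open>x \<notin> v j\<close> by auto
  ultimately have "card {x, a, b, c, d} = 5" using d(2) by simp
  moreover have "{x, a, b, c, d} \<subseteq> w" using a b c d xw by blast
  ultimately show ?thesis using that af bf c d by blast
qed

lemma card_Bset_le_of_disjoint_images:
  assumes indep: "indep_Gnr1 n r A" and vjA: "v j \<in> A" and "x \<notin> v j"
    and "i \<in> {1..k}" "j \<in> {1..k}" "i \<noteq> j"
    and u1: "u1 \<in> Bset A k v x i" and u2: "u2 \<in> Bset A k v x i"
    and f: "\<And>u. u \<in> Bset A k v x i \<Longrightarrow> u - insert x (v i) \<subseteq> f u"
    and disj: "f u1 \<inter> f u2 = {}" and "finite (f u1)" "finite (f u2)"
  shows "card (Bset A k v x j) \<le> card (f u1) * card (f u2) * r * r * (n choose (r - 5))"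
proof -
  have cover: "\<forall>W\<in>Bset A k v x j. \<exists>a\<in>f u1. \<exists>b\<in>f u2. \<exists>c\<in>v j. \<exists>d\<in>v j.
          card {x, a, b, c, d} = 5 \<and> {x, a, b, c, d} \<subseteq> W"
  proof
    fix W assume W: "W \<in> Bset A k v x j"
    obtain a b c d where "a \<in> f u1" "b \<in> f u2" "c \<in> v j" "d \<in> v j"
      "card {x, a, b, c, d} = 5" "{x, a, b, c, d} \<subseteq> W"
      by (rule Bset_contains_five_set[OF assms(1-6) u1 u2 W f disj])
    then show "\<exists>a\<in>f u1. \<exists>b\<in>f u2. \<exists>c\<in>v j. \<exists>d\<in>v j.
          card {x, a, b, c, d} = 5 \<and> {x, a, b, c, d} \<subseteq> W" by blast
  qed
  have vj: "finite (v j)" "card (v j) = r"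
    using vjA indep r_subsetsD by (auto simp: indep_Gnr1_def)
  show ?thesis
    using card_covered_by_five_sets_le[OF Bset_subset_r_subsets[OF indep] assms(11,12) vj(1) cover]
    by (simp only: vj(2))
qed

theorem lemma7:
  fixes n r k x i j :: nat and A :: "nat set set" and v :: "nat \<Rightarrow> nat set"
    and f :: "nat set \<Rightarrow> nat set"
  assumes "r \<ge> 5"
    and "indep_Gnr1 n r A"
    and "max_disjoint_subfamily A k v"
    and "x \<in> {1..n} - (I0 k v \<union> Pset n A k v)"
    and "i \<in> {1..k}" and "j \<in> {1..k}" and "i \<noteq> j"
    and "\<forall>w \<in> Bset A k v x i. \<exists>y z. y \<noteq> z \<and> y \<in> w \<inter> v i \<and> z \<in> w \<inter> v i
            \<and> f w = w - {x, y, z}"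
    and "Bset A k v x i \<noteq> {}"
    and "card (Bset A k v x j) \<ge> r ^ 5 * (n choose (r - 5))"
  shows "\<forall>u1 \<in> Bset A k v x i. \<forall>u2 \<in> Bset A k v x i. f u1 \<inter> f u2 \<noteq> {}"
proof (intro ballI notI)
  fix u1 u2 assume u1: "u1 \<in> Bset A k v x i" and u2: "u2 \<in> Bset A k v x i"
    and disj: "f u1 \<inter> f u2 = {}"
  have B: "Bset A k v x i \<subseteq> r_subsets n r" using assms(2) by (rule Bset_subset_r_subsets)
  have vjA: "v j \<in> A" using assms(3,6) by (auto simp: max_disjoint_subfamily_def)
  have "x \<notin> v j" using assms(4,6) by (auto simp: I0_def)
  have f: "u - insert x (v i) \<subseteq> f u" "f u \<subseteq> u" if u: "u \<in> Bset A k v x i" for u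
  proof -
    obtain y z where "y \<in> v i" "z \<in> v i" "f u = u - {x, y, z}"
      using assms(8) u by blast
    then show "u - insert x (v i) \<subseteq> f u" "f u \<subseteq> u" by auto
  qed
  have fu: "finite (f u)" "card (f u) \<le> r" if u: "u \<in> Bset A k v x i" for u
    using r_subsetsD[OF subsetD[OF B u]] finite_subset[OF f(2)[OF u]] card_mono[OF _ f(2)[OF u]]
    by simp_all
  have "card (Bset A k v x j) \<le> card (f u1) * card (f u2) * r * r * (n choose (r - 5))"
    using card_Bset_le_of_disjoint_images[OF assms(2) vjA \<open>x \<notin> v j\<close> assms(5-7) u1 u2 f(1) disj]
      fu(1) u1 u2 by blast
  also have "\<dots> \<le> r ^ 4 * (n choose (r - 5))"
    using fu(2)[OF u1] fu(2)[OF u2] by (simp add: power4_eq_xxxx mult_le_mono)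
  finally have "r ^ 5 * (n choose (r - 5)) \<le> r ^ 4 * (n choose (r - 5))"
    using assms(10) by linarith
  moreover have "r \<le> n"
    using r_subsetsD[OF subsetD[OF B u1]] card_mono[of "{1..n}" u1] by simp
  then have "n choose (r - 5) > 0" by simp
  moreover have "r ^ 4 < r ^ 5" using assms(1) by (simp add: power_strict_increasing)
  ultimately show False by simp
qed

end
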